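(* Let $n\geq 1$ and $r\geq 4$ be integers, and let $S_r=\{0,1,\ldots,2^r-1\}$. Then there is a labeling of every arc of the complete binary tree of depth $n$ by letters of $S_r$ with the following property. Let $u$ and $v$ be any two distinct nodes at a common depth $h$. Let their least common ancestor have depth $h-l$, so $l\geq1$. Let $a_1a_2\ldots a_h$ and $b_1b_2\ldots b_h$ be the letters on the arcs of the root-to-$u$ and root-to-$v$ paths, respectively. Then $$H(a_{h-l+1}a_{h-l+2}\ldots a_h,\;b_{h-l+1}b_{h-l+2}\ldots b_h)\geq\begin{cases} l & \text{if } l\leq r,\\ r & \text{if } r<l\leq 2r,\\ l/2 & \text{if } l>2r.\end{cases}$$ Here $H$ is the Hamming distance, i.e. the number of positions $i$ with $a_i\neq b_i$.
   Context: An "$r$-bit binary tree code of depth $n$" is a complete binary tree of depth $n$ in which every arc is labeled with a letter from the alphabet $S_r=\{0,1,\ldots,2^r-1\}$. The letters can be viewed as $r$-bit vectors. The distance requirement on the labeling is the one stated in the claim. *)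

theory Defs
  imports Complex_Main
begin

(* Nodes of the complete binary tree of depth n are bool lists of length <= n
   (the root is []); the arc entering a nonempty node w is identified with w.
   The letter on the i-th arc (1-based) of the root-to-u path is lab (take i u). *)

definition valid_labeling :: "nat \<Rightarrow> nat \<Rightarrow> (bool list \<Rightarrow> nat) \<Rightarrow> bool" where
  "valid_labeling r n lab \<longleftrightarrow>
     (\<forall>w. w \<noteq> [] \<and> length w \<le> n \<longrightarrow> lab w < 2 ^ r)"

fun lca_depth :: "bool list \<Rightarrow> bool list \<Rightarrow> nat" where
  "lca_depth (x # xs) (y # ys) = (if x = y then Suc (lca_depth xs ys) else 0)"
| "lca_depth _ _ = 0"

definition suffix_hamming ::
  "(bool list \<Rightarrow> nat) \<Rightarrow> bool list \<Rightarrow> bool list \<Rightarrow> nat \<Rightarrow> nat \<Rightarrow> nat" where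
  "suffix_hamming lab u v h l =
     card {i \<in> {h - l + 1 .. h}. lab (take i u) \<noteq> lab (take i v)}"

definition tree_code_bound :: "nat \<Rightarrow> nat \<Rightarrow> real" where
  "tree_code_bound r l =
     (if l \<le> r then real l else if l \<le> 2 * r then real r else real l / 2)"

end

theory Submission
  imports Defs
begin

text \<open>
The labeling is a binary convolutional code: the arc entering the node with path bits
\<open>w\<^sub>0, \<dots>, w\<^sub>i\<^sub>-\<^sub>1\<close> gets the XOR of the letters \<open>A (i - 1 - j)\<close> over all \<open>j\<close> with \<open>w\<^sub>j\<close> set.
By linearity, if \<open>u\<close> and \<open>v\<close> first differ at depth \<open>c\<close>, their labels at depth \<open>c + 1 + k\<close>
differ iff the XOR convolution of \<open>A\<close> with the difference pattern \<open>E\<close> (a set containing \<open>0\<close>)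
is nonzero at \<open>k\<close>. Choosing \<open>A k = 2 ^ k\<close> for \<open>k < r\<close> makes bit \<open>k\<close> of the convolution
at \<open>k\<close> equal to 1, which gives the bounds \<open>l\<close> and \<open>r\<close>.

For \<open>l > 2 r\<close> the remaining letters are found by counting. For a fixed pattern the
convolution vanishes at \<open>k \<ge> r\<close> iff \<open>A k\<close> equals a value determined by the earlier letters,
so the sum over all words of 16 to the power of the number of zeros is explicit. Markov's
inequality and a union bound over \<open>l\<close> and the at most \<open>2 ^ l\<close> patterns then show that, for
\<open>r \<ge> 4\<close>, fewer than half of all choices of letters are bad.
\<close>

section \<open>XOR sums\<close>

global_interpretation xor_sum: comm_monoid_set "xor :: nat \<Rightarrow> nat \<Rightarrow> nat" 0
  defines xor_sum = xor_sum.F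
  by unfold_locales

lemma xor_eq_0_iff: "xor (a::nat) b = 0 \<longleftrightarrow> a = b"
  by (metis xor_self_eq xor.assoc xor.left_neutral xor.commute)

lemma bit_xor_sum_iff:
  assumes "finite S"
  shows "bit (xor_sum f S) b \<longleftrightarrow> odd (card {s\<in>S. bit (f s) b})"
  using assms
proof (induction S rule: finite_induct)
  case (insert x S)
  have "{s \<in> insert x S. bit (f s) b} =
      (if bit (f x) b then insert x {s\<in>S. bit (f s) b} else {s\<in>S. bit (f s) b})"
    by auto
  with insert show ?case by (auto simp: bit_xor_iff)
qed simp

lemma xor_sum_less_power:
  assumes "\<And>s. s \<in> S \<Longrightarrow> f s < 2 ^ r"
  shows "xor_sum f S < 2 ^ r"
proof (cases "finite S")
  case True
  then show ?thesis
    using assms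
  proof (induction S rule: finite_induct)
    case (insert x S)
    then have "take_bit r (f x) = f x" "take_bit r (xor_sum f S) = xor_sum f S"
      by (simp_all add: take_bit_nat_eq_self_iff)
    then have "take_bit r (xor (f x) (xor_sum f S)) = xor (f x) (xor_sum f S)"
      by (simp add: take_bit_xor)
    with insert show ?case by (metis take_bit_nat_eq_self_iff xor_sum.insert)
  qed simp
qed simp

lemma xor_xor_sum_eq_xor_sum_sym_diff:
  assumes "finite S" "finite T"
  shows "xor (xor_sum f S) (xor_sum f T) = xor_sum f (sym_diff S T)"
proof -
  have "xor_sum f (sym_diff S T) = xor (xor_sum f (S - T)) (xor_sum f (T - S))"
    using assms by (intro xor_sum.union_disjoint) auto
  moreover have "xor (xor c a) (xor c b) = xor a b" for a b c :: nat
    by (metis xor.assoc xor.left_commute xor_self_eq xor.left_neutral)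
  ultimately show ?thesis
    using xor_sum.Int_Diff[OF assms(1), of f T] xor_sum.Int_Diff[OF assms(2), of f S]
    by (simp add: Int_commute)
qed

section \<open>Counting words\<close>

definition words :: "nat \<Rightarrow> nat \<Rightarrow> nat list set" where
  "words q n = {cs. set cs \<subseteq> {..<q} \<and> length cs = n}"

lemma finite_words: "finite (words q n)"
  unfolding words_def by (rule finite_lists_length_eq) auto

lemma card_words: "card (words q n) = q ^ n"
  unfolding words_def by (subst card_lists_length_eq) auto

lemma words_Suc: "words q (Suc n) = (\<lambda>(cs, x). cs @ [x]) ` (words q n \<times> {..<q})"
proof
  show "words q (Suc n) \<subseteq> (\<lambda>(cs, x). cs @ [x]) ` (words q n \<times> {..<q})"
  proof
    fix ys assume ys: "ys \<in> words q (Suc n)"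
    then have "ys \<noteq> []" by (auto simp: words_def)
    then have "ys = butlast ys @ [last ys]" by simp
    moreover have "butlast ys \<in> words q n" "last ys < q"
      using ys \<open>ys \<noteq> []\<close> by (auto simp: words_def dest: in_set_butlastD last_in_set)
    ultimately show "ys \<in> (\<lambda>(cs, x). cs @ [x]) ` (words q n \<times> {..<q})"
      by (metis (no_types, lifting) SigmaI case_prod_conv image_eqI lessThan_iff)
  qed
qed (auto simp: words_def)

lemma sum_words_Suc:
  "(\<Sum>ys\<in>words q (Suc n). g ys) = (\<Sum>cs\<in>words q n. \<Sum>x<q. g (cs @ [x]))"
proof -
  have "inj_on (\<lambda>(cs, x). cs @ [x]) (words q n \<times> {..<q})"
    by (auto simp: inj_on_def)
  then show ?thesis
    by (simp add: words_Suc sum.reindex sum.cartesian_product case_prod_unfold)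
qed

lemma sum_if_eq_lessThan:
  fixes t :: "'a::comm_ring_1"
  assumes "c < q"
  shows "(\<Sum>x<q. if x = c then t else 1) = of_nat q - 1 + t"
proof -
  have "(\<Sum>x<q. if x = c then t else 1) = (\<Sum>x<q. 1 + (if x = c then t - 1 else 0))"
    by (rule sum.cong) auto
  also have "\<dots> = of_nat q + (t - 1)"
    using assms by (simp add: sum.distrib)
  finally show ?thesis by simp
qed

definition hits :: "(nat \<Rightarrow> nat list \<Rightarrow> nat) \<Rightarrow> nat set \<Rightarrow> nat list \<Rightarrow> nat set" where
  "hits f K cs = {k\<in>K. cs ! k = f k (take k cs)}"

lemma sum_power_card_hits_snoc:
  fixes t :: "'a::comm_ring_1"
  assumes "K \<subseteq> {..<Suc n}" and "cs \<in> words q n" and "f n cs < q"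
  shows "(\<Sum>x<q. t ^ card (hits f K (cs @ [x])))
    = (if n \<in> K then of_nat q - 1 + t else of_nat q) * t ^ card (hits f (K - {n}) cs)"
proof -
  have "finite K"
    using assms(1) finite_subset by blast
  have "hits f K (cs @ [x]) = hits f (K - {n}) cs \<union> (if n \<in> K \<and> x = f n cs then {n} else {})" for x
    using assms(1,2) by (auto simp: hits_def words_def nth_append subset_iff less_Suc_eq)
  then have "t ^ card (hits f K (cs @ [x]))
      = (if n \<in> K \<and> x = f n cs then t else 1) * t ^ card (hits f (K - {n}) cs)" for x
    using \<open>finite K\<close> by (simp add: hits_def)
  then have "(\<Sum>x<q. t ^ card (hits f K (cs @ [x])))
      = (\<Sum>x<q. if n \<in> K \<and> x = f n cs then t else 1) * t ^ card (hits f (K - {n}) cs)"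
    by (simp add: sum_distrib_right)
  also have "(\<Sum>x<q. if n \<in> K \<and> x = f n cs then t else 1)
      = (if n \<in> K then of_nat q - 1 + t else of_nat q)"
    using sum_if_eq_lessThan[OF assms(3), where t = t] by simp
  finally show ?thesis .
qed

lemma sum_words_power_card_hits:
  fixes t :: "'a::comm_ring_1"
  assumes "K \<subseteq> {..<n}" and "\<And>k cs. k < n \<Longrightarrow> cs \<in> words q k \<Longrightarrow> f k cs < q"
  shows "(\<Sum>cs\<in>words q n. t ^ card (hits f K cs)) = of_nat q ^ (n - card K) * (of_nat q - 1 + t) ^ card K"
  using assms
proof (induction n arbitrary: K)
  case 0
  have "words q 0 = {[]}"
    by (auto simp: words_def)
  with 0 show ?case
    by (simp add: hits_def)
next
  case (Suc n)
  let ?K = "K - {n}"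
  have K_less: "?K \<subseteq> {..<n}"
    using Suc.prems(1) by auto
  have "(\<Sum>cs\<in>words q (Suc n). t ^ card (hits f K cs))
      = (if n \<in> K then of_nat q - 1 + t else of_nat q) * (\<Sum>cs\<in>words q n. t ^ card (hits f ?K cs))"
    using Suc.prems
    by (simp add: sum_words_Suc sum_power_card_hits_snoc sum_distrib_left)
  also have "\<dots> = (if n \<in> K then of_nat q - 1 + t else of_nat q)
      * (of_nat q ^ (n - card ?K) * (of_nat q - 1 + t) ^ card ?K)"
    using K_less Suc.prems(2) by (subst Suc.IH) auto
  also have "\<dots> = of_nat q ^ (Suc n - card K) * (of_nat q - 1 + t) ^ card K"
  proof (cases "n \<in> K")
    case True
    then have "card K = Suc (card ?K)"
      using Suc.prems(1) by (metis card_Suc_Diff1 finite_lessThan finite_subset)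
    with True show ?thesis
      by (simp only: if_True diff_Suc_Suc power_Suc ac_simps)
  next
    case False
    then have "card K \<le> n"
      using card_mono[OF _ K_less] by simp
    with False show ?thesis
      by (simp add: Suc_diff_le)
  qed
  finally show ?case .
qed

lemma card_filter_mult_le_sum:
  fixes w :: "'a \<Rightarrow> real" and B :: real
  assumes "finite S" and "\<And>x. x \<in> S \<Longrightarrow> P x \<Longrightarrow> B \<le> w x" and "\<And>x. x \<in> S \<Longrightarrow> 0 \<le> w x"
  shows "card {x\<in>S. P x} * B \<le> sum w S"
proof -
  have "card {x\<in>S. P x} * B = (\<Sum>x\<in>{x\<in>S. P x}. B)" by simp
  also have "\<dots> \<le> (\<Sum>x\<in>{x\<in>S. P x}. w x)"
    using assms(2) by (intro sum_mono) auto
  also have "\<dots> \<le> sum w S"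
    using assms by (intro sum_mono2) auto
  finally show ?thesis .
qed

section \<open>XOR convolution\<close>

definition xor_conv :: "(nat \<Rightarrow> nat) \<Rightarrow> nat set \<Rightarrow> nat \<Rightarrow> nat" where
  "xor_conv A E k = xor_sum (\<lambda>t. A (k - t)) {t\<in>E. t \<le> k}"

lemma xor_conv_nonzero:
  assumes "0 \<in> E" and "k < r" and "\<And>j. j < r \<Longrightarrow> A j = 2 ^ j"
  shows "xor_conv A E k \<noteq> 0"
proof -
  have "{t \<in> {t\<in>E. t \<le> k}. bit (A (k - t)) k} = {0}"
    using assms by (auto simp: bit_exp_iff)
  then have "bit (xor_conv A E k) k"
    unfolding xor_conv_def by (simp add: bit_xor_sum_iff)
  then show ?thesis
    by (cases "xor_conv A E k") simp_all
qed

lemma xor_conv_eq_0_iff: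
  assumes "0 \<in> E"
  shows "xor_conv A E k = 0 \<longleftrightarrow> A k = xor_sum (\<lambda>t. A (k - t)) {t\<in>E. 0 < t \<and> t \<le> k}"
proof -
  have "{t\<in>E. t \<le> k} = insert 0 {t\<in>E. 0 < t \<and> t \<le> k}"
    using assms by auto
  then show ?thesis
    unfolding xor_conv_def by (simp add: xor_sum.insert xor_eq_0_iff)
qed

lemma card_xor_conv_nonzero_add_card_zero:
  assumes "0 \<in> E" and "r \<le> l" and "\<And>j. j < r \<Longrightarrow> A j = 2 ^ j"
  shows "card {k\<in>{..<l}. xor_conv A E k \<noteq> 0} + card {k\<in>{r..<l}. xor_conv A E k = 0} = l"
proof -
  let ?Z = "{k. xor_conv A E k = 0}"
  have "r \<le> k" if "xor_conv A E k = 0" for k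
    using xor_conv_nonzero assms(1,3) that not_le by blast
  then have "{k\<in>{r..<l}. xor_conv A E k = 0} = {..<l} \<inter> ?Z"
    by auto
  moreover have "{k\<in>{..<l}. xor_conv A E k \<noteq> 0} = {..<l} - ?Z"
    by auto
  ultimately show ?thesis
    using card_Int_Diff[of "{..<l}" ?Z] by simp
qed

text \<open>The entries \<open>cs ! k\<close> with \<open>k < r\<close> are ignored, so that \<open>cs\<close> ranges over all words
  of length \<open>n\<close>.\<close>

definition generator :: "nat \<Rightarrow> nat list \<Rightarrow> nat \<Rightarrow> nat" where
  "generator r cs k = (if k < r then 2 ^ k else if k < length cs then cs ! k else 0)"

lemma generator_less: "set cs \<subseteq> {..<2 ^ r} \<Longrightarrow> generator r cs k < 2 ^ r"
  unfolding generator_def by (auto simp: subset_iff)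

lemma generator_take: "j < k \<Longrightarrow> k \<le> length cs \<Longrightarrow> generator r (take k cs) j = generator r cs j"
  unfolding generator_def by simp

lemma sum_words_power_card_zeros:
  fixes t :: real
  assumes "0 \<in> E" and "r \<le> l" and "l \<le> n"
  shows "(\<Sum>cs\<in>words (2 ^ r) n. t ^ card {k\<in>{r..<l}. xor_conv (generator r cs) E k = 0})
    = (2 ^ r) ^ (n - (l - r)) * (2 ^ r - 1 + t) ^ (l - r)"
proof -
  define f where "f k cs = xor_sum (\<lambda>t. generator r cs (k - t)) {t\<in>E. 0 < t \<and> t \<le> k}" for k cs
  have "xor_conv (generator r cs) E k = 0 \<longleftrightarrow> cs ! k = f k (take k cs)"
    if "cs \<in> words (2 ^ r) n" and "k \<in> {r..<l}" for cs k
  proof -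
    have "f k (take k cs) = xor_sum (\<lambda>t. generator r cs (k - t)) {t\<in>E. 0 < t \<and> t \<le> k}"
      unfolding f_def using that assms(3)
      by (intro xor_sum.cong) (auto simp: words_def generator_take)
    moreover have "generator r cs k = cs ! k"
      using that assms(3) by (auto simp: words_def generator_def)
    ultimately show ?thesis
      by (simp add: xor_conv_eq_0_iff[OF assms(1)])
  qed
  then have "(\<Sum>cs\<in>words (2 ^ r) n. t ^ card {k\<in>{r..<l}. xor_conv (generator r cs) E k = 0})
      = (\<Sum>cs\<in>words (2 ^ r) n. t ^ card (hits f {r..<l} cs))"
    unfolding hits_def by (intro sum.cong refl arg_cong[where f = "\<lambda>K. t ^ card K"]) auto
  also have "\<dots> = of_nat (2 ^ r) ^ (n - (l - r)) * (of_nat (2 ^ r) - 1 + t) ^ (l - r)"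
    using assms(3)
    by (subst sum_words_power_card_hits)
      (auto simp: f_def words_def intro!: xor_sum_less_power generator_less)
  finally show ?thesis
    by simp
qed

definition good_generator :: "nat \<Rightarrow> nat \<Rightarrow> nat list \<Rightarrow> bool" where
  "good_generator r n cs \<longleftrightarrow> (\<forall>l\<in>{2*r<..n}. \<forall>E. E \<subseteq> {..<l} \<and> 0 \<in> E \<longrightarrow>
     2 * card {k\<in>{r..<l}. xor_conv (generator r cs) E k = 0} \<le> l)"

lemma card_bad_generators_le:
  assumes "0 \<in> E" and "r \<le> l" and "l \<le> n"
  shows "real (card {cs\<in>words (2 ^ r) n. l < 2 * card {k\<in>{r..<l}. xor_conv (generator r cs) E k = 0}})
    \<le> (2 ^ r) ^ (n - (l - r)) * (2 ^ r + 15) ^ (l - r) / 4 ^ (l + 1)"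
proof -
  let ?Z = "\<lambda>cs. card {k\<in>{r..<l}. xor_conv (generator r cs) E k = 0}"
  have "(4::real) ^ (l + 1) \<le> 16 ^ ?Z cs" if "l < 2 * ?Z cs" for cs
  proof -
    have "(4::real) ^ (l + 1) \<le> 4 ^ (2 * ?Z cs)"
      using that by (intro power_increasing) auto
    then show ?thesis
      by (simp add: power_mult)
  qed
  then have "card {cs\<in>words (2 ^ r) n. l < 2 * ?Z cs} * (4::real) ^ (l + 1)
      \<le> (\<Sum>cs\<in>words (2 ^ r) n. 16 ^ ?Z cs)"
    by (intro card_filter_mult_le_sum) (auto simp: finite_words)
  also have "\<dots> = (2 ^ r) ^ (n - (l - r)) * (2 ^ r + 15) ^ (l - r)"
    using sum_words_power_card_zeros[OF assms, of 16] by (simp add: add.commute)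
  finally show ?thesis
    by (simp add: field_simps)
qed

lemma count_term_le_geometric:
  fixes Q :: real
  assumes "16 \<le> Q" and "r \<le> l" and "l \<le> n"
  shows "2 ^ l * (Q ^ (n - (l - r)) * (Q + 15) ^ (l - r) / 4 ^ (l + 1))
    \<le> Q ^ n * (1/2) ^ (r + 2) * (31/32) ^ (l - r)"
proof -
  obtain j where j: "l = r + j" using assms(2) le_Suc_ex by blast
  obtain s where s: "n = l + s" using assms(3) le_Suc_ex by blast
  define c where "c = Q ^ (r + s) * (1/2) ^ (r + 2)"
  have "((Q + 15) / 2) ^ j \<le> (31 * Q / 32) ^ j"
    using assms(1) by (intro power_mono) auto
  moreover have "2 ^ l * (Q ^ (n - (l - r)) * (Q + 15) ^ (l - r) / 4 ^ (l + 1)) = c * ((Q + 15) / 2) ^ j"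
    unfolding c_def j s by (simp add: power_add power_divide field_simps flip: power_mult_distrib)
  moreover have "Q ^ n * (1/2) ^ (r + 2) * (31/32) ^ (l - r) = c * (31 * Q / 32) ^ j"
    unfolding c_def j s by (simp add: power_add power_divide power_mult_distrib field_simps)
  ultimately show ?thesis
    using assms(1) by (simp add: c_def mult_left_mono)
qed

lemma sum_geometric_tail_le: "(\<Sum>l\<in>{2*r<..n}. (31/32::real) ^ (l - r)) \<le> 32"
proof -
  have "(\<Sum>l\<in>{2*r<..n}. (31/32::real) ^ (l - r)) = (\<Sum>j\<in>(\<lambda>l. l - r) ` {2*r<..n}. (31/32) ^ j)"
    by (subst sum.reindex) (auto simp: inj_on_def)
  also have "\<dots> \<le> (\<Sum>j<Suc n. (31/32) ^ j)"
    by (intro sum_mono2) auto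
  also have "\<dots> = (1 - (31/32) ^ Suc n) / (1 - 31/32)"
    by (subst sum_gp_strict) simp
  also have "\<dots> \<le> 32"
    by simp
  finally show ?thesis .
qed

lemma card_not_good_generator_le:
  "real (card {cs\<in>words (2 ^ r) n. \<not> good_generator r n cs})
    \<le> (\<Sum>l\<in>{2*r<..n}. 2 ^ l * ((2 ^ r) ^ (n - (l - r)) * (2 ^ r + 15) ^ (l - r) / 4 ^ (l + 1)))"
proof -
  define Pat where "Pat l = {E. E \<subseteq> {..<l} \<and> 0 \<in> E}" for l :: nat
  define Bad where "Bad l E =
    {cs\<in>words (2 ^ r) n. l < 2 * card {k\<in>{r..<l}. xor_conv (generator r cs) E k = 0}}" for l E
  define bound :: "nat \<Rightarrow> real"
    where "bound l = (2 ^ r) ^ (n - (l - r)) * (2 ^ r + 15) ^ (l - r) / 4 ^ (l + 1)" for l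
  have finite_Pat: "finite (Pat l)" for l
    unfolding Pat_def by (rule finite_subset[of _ "Pow {..<l}"]) auto
  have card_Pat: "card (Pat l) \<le> 2 ^ l" for l
    using card_mono[of "Pow {..<l}" "Pat l"] by (auto simp: Pat_def card_Pow)
  have "{cs\<in>words (2 ^ r) n. \<not> good_generator r n cs} = (\<Union>l\<in>{2*r<..n}. \<Union>E\<in>Pat l. Bad l E)"
    by (auto simp: good_generator_def Bad_def Pat_def not_le)
  moreover have "card (\<Union>l\<in>{2*r<..n}. \<Union>E\<in>Pat l. Bad l E) \<le> (\<Sum>l\<in>{2*r<..n}. \<Sum>E\<in>Pat l. card (Bad l E))"
    by (intro order.trans[OF card_UN_le] sum_mono card_UN_le finite_Pat) simp_all
  ultimately have "real (card {cs\<in>words (2 ^ r) n. \<not> good_generator r n cs})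
      \<le> (\<Sum>l\<in>{2*r<..n}. \<Sum>E\<in>Pat l. real (card (Bad l E)))"
    by (simp only: of_nat_sum[symmetric] of_nat_le_iff)
  also have "\<dots> \<le> (\<Sum>l\<in>{2*r<..n}. \<Sum>E\<in>Pat l. bound l)"
  proof (intro sum_mono)
    fix l E assume "l \<in> {2*r<..n}" and "E \<in> Pat l"
    then show "real (card (Bad l E)) \<le> bound l"
      unfolding Bad_def bound_def Pat_def by (intro card_bad_generators_le) auto
  qed
  also have "\<dots> \<le> (\<Sum>l\<in>{2*r<..n}. 2 ^ l * bound l)"
  proof (intro sum_mono)
    fix l
    have "0 \<le> bound l"
      by (simp add: bound_def)
    then show "(\<Sum>E\<in>Pat l. bound l) \<le> 2 ^ l * bound l"
      using card_Pat[of l] by (simp add: mult_right_mono)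
  qed
  finally show ?thesis
    by (simp add: bound_def)
qed

lemma union_bound_less_card_words:
  assumes "4 \<le> r"
  shows "(\<Sum>l\<in>{2*r<..n}. 2 ^ l * ((2 ^ r) ^ (n - (l - r)) * (2 ^ r + 15) ^ (l - r) / 4 ^ (l + 1)))
    < real (card (words (2 ^ r) n))"
proof -
  define Q :: real where "Q = 2 ^ r"
  have "16 \<le> Q"
    using power_increasing[OF assms, of "2::real"] by (simp add: Q_def)
  have "(\<Sum>l\<in>{2*r<..n}. 2 ^ l * (Q ^ (n - (l - r)) * (Q + 15) ^ (l - r) / 4 ^ (l + 1)))
      \<le> (\<Sum>l\<in>{2*r<..n}. Q ^ n * (1/2) ^ (r + 2) * (31/32) ^ (l - r))"
    using \<open>16 \<le> Q\<close> by (intro sum_mono count_term_le_geometric) auto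
  also have "\<dots> = Q ^ n * (1/2) ^ (r + 2) * (\<Sum>l\<in>{2*r<..n}. (31/32) ^ (l - r))"
    by (simp add: sum_distrib_left)
  also have "\<dots> \<le> Q ^ n * (1/2) ^ (r + 2) * 32"
    by (intro mult_left_mono sum_geometric_tail_le) (simp add: Q_def)
  also have "\<dots> = Q ^ n * (8 / Q)"
    by (simp add: Q_def power_add power_one_over)
  also have "\<dots> \<le> Q ^ n / 2"
    using \<open>16 \<le> Q\<close> by (simp add: field_simps)
  also have "\<dots> < card (words (2 ^ r) n)"
    by (simp add: card_words Q_def)
  finally show ?thesis
    by (simp add: Q_def)
qed

lemma exists_good_generator:
  assumes "4 \<le> r"
  shows "\<exists>cs\<in>words (2 ^ r) n. good_generator r n cs"
proof -
  have "card {cs\<in>words (2 ^ r) n. \<not> good_generator r n cs} < card (words (2 ^ r) n)"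
    using card_not_good_generator_le[of r n] union_bound_less_card_words[OF assms, of n]
    by linarith
  then have "{cs\<in>words (2 ^ r) n. \<not> good_generator r n cs} \<noteq> words (2 ^ r) n"
    by auto
  then show ?thesis
    by auto
qed

lemma tree_code_bound_le_card_xor_conv_nonzero:
  assumes "good_generator r n cs" and "0 \<in> E" and "E \<subseteq> {..<l}" and "l \<le> n"
  shows "tree_code_bound r l \<le> card {k\<in>{..<l}. xor_conv (generator r cs) E k \<noteq> 0}"
proof -
  let ?N = "card {k\<in>{..<l}. xor_conv (generator r cs) E k \<noteq> 0}"
  have unit_prefix: "generator r cs j = 2 ^ j" if "j < r" for j
    using that by (simp add: generator_def)
  have prefix: "{..<min l r} \<subseteq> {k\<in>{..<l}. xor_conv (generator r cs) E k \<noteq> 0}"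
    using xor_conv_nonzero[OF assms(2) _ unit_prefix] by auto
  have "min l r \<le> ?N"
    using card_mono[OF _ prefix] by simp
  moreover have "l \<le> 2 * ?N" if "2 * r < l"
  proof -
    have "2 * card {k\<in>{r..<l}. xor_conv (generator r cs) E k = 0} \<le> l"
      using assms that unfolding good_generator_def by auto
    moreover have "?N + card {k\<in>{r..<l}. xor_conv (generator r cs) E k = 0} = l"
      using that by (intro card_xor_conv_nonzero_add_card_zero[OF assms(2) _ unit_prefix]) simp
    ultimately show ?thesis by linarith
  qed
  ultimately show ?thesis
    unfolding tree_code_bound_def by auto
qed

section \<open>The convolutional tree labeling\<close>

definition conv_labeling :: "(nat \<Rightarrow> nat) \<Rightarrow> bool list \<Rightarrow> nat" where
  "conv_labeling A w = xor_sum (\<lambda>j. A (length w - 1 - j)) {j. j < length w \<and> w ! j}"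

lemma valid_labeling_conv_labeling:
  "(\<And>k. A k < 2 ^ r) \<Longrightarrow> valid_labeling r n (conv_labeling A)"
  unfolding valid_labeling_def conv_labeling_def by (auto intro: xor_sum_less_power)

lemma xor_conv_labeling_take:
  assumes "i \<le> length u" and "i \<le> length v"
  shows "xor (conv_labeling A (take i u)) (conv_labeling A (take i v))
    = xor_sum (\<lambda>j. A (i - 1 - j)) {j. j < i \<and> u ! j \<noteq> v ! j}"
proof -
  have "conv_labeling A (take i w) = xor_sum (\<lambda>j. A (i - 1 - j)) {j. j < i \<and> w ! j}"
    if "i \<le> length w" for w
    unfolding conv_labeling_def using that by (intro xor_sum.cong) auto
  moreover have "sym_diff {j. j < i \<and> u ! j} {j. j < i \<and> v ! j} = {j. j < i \<and> u ! j \<noteq> v ! j}"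
    by auto
  ultimately show ?thesis
    using assms by (simp add: xor_xor_sum_eq_xor_sum_sym_diff)
qed

lemma nth_less_lca_depth: "j < lca_depth u v \<Longrightarrow> u ! j = v ! j"
  by (induction u v arbitrary: j rule: lca_depth.induct) (auto simp: nth_Cons split: nat.split if_splits)

lemma lca_depth_less_length: "length u = length v \<Longrightarrow> u \<noteq> v \<Longrightarrow> lca_depth u v < length u"
  by (induction u v rule: lca_depth.induct) auto

lemma nth_lca_depth_neq: "length u = length v \<Longrightarrow> u \<noteq> v \<Longrightarrow> u ! lca_depth u v \<noteq> v ! lca_depth u v"
  by (induction u v rule: lca_depth.induct) auto

lemma conv_labeling_take_neq_iff:
  assumes "length u = h" and "length v = h" and "c < i" and "i \<le> h"
    and "\<And>j. j < c \<Longrightarrow> u ! j = v ! j"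
  shows "conv_labeling A (take i u) \<noteq> conv_labeling A (take i v)
    \<longleftrightarrow> xor_conv A {t. t < h - c \<and> u ! (c + t) \<noteq> v ! (c + t)} (i - 1 - c) \<noteq> 0"
proof -
  define E where "E = {t. t < h - c \<and> u ! (c + t) \<noteq> v ! (c + t)}"
  have diff: "{j. j < i \<and> u ! j \<noteq> v ! j} = (+) c ` {t\<in>E. t \<le> i - 1 - c}"
  proof (intro set_eqI iffI)
    fix j assume j: "j \<in> {j. j < i \<and> u ! j \<noteq> v ! j}"
    then have "c \<le> j"
      using assms(5) not_le by blast
    with j show "j \<in> (+) c ` {t\<in>E. t \<le> i - 1 - c}"
      using assms(3,4) by (auto simp: E_def intro!: image_eqI[of _ _ "j - c"])
  qed (use assms(3,4) in \<open>auto simp: E_def\<close>)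
  have "xor (conv_labeling A (take i u)) (conv_labeling A (take i v))
      = xor_sum (\<lambda>j. A (i - 1 - j)) {j. j < i \<and> u ! j \<noteq> v ! j}"
    using assms(1,2,4) by (intro xor_conv_labeling_take) auto
  also have "\<dots> = xor_sum (\<lambda>j. A (i - 1 - j)) ((+) c ` {t\<in>E. t \<le> i - 1 - c})"
    unfolding diff ..
  also have "\<dots> = xor_conv A E (i - 1 - c)"
    by (simp add: xor_conv_def xor_sum.reindex comp_def diff_diff_add)
  finally show ?thesis
    by (metis E_def xor_eq_0_iff)
qed

lemma suffix_hamming_conv_labeling:
  assumes "length u = h" and "length v = h" and "c < h" and "\<And>j. j < c \<Longrightarrow> u ! j = v ! j"
  shows "suffix_hamming (conv_labeling A) u v h (h - c)
    = card {k\<in>{..<h - c}. xor_conv A {t. t < h - c \<and> u ! (c + t) \<noteq> v ! (c + t)} k \<noteq> 0}"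
proof -
  let ?E = "{t. t < h - c \<and> u ! (c + t) \<noteq> v ! (c + t)}"
  have neq_iff: "conv_labeling A (take i u) \<noteq> conv_labeling A (take i v) \<longleftrightarrow> xor_conv A ?E (i - 1 - c) \<noteq> 0"
    if "c < i" and "i \<le> h" for i
    by (rule conv_labeling_take_neq_iff[OF assms(1,2) that assms(4)])
  have "{i\<in>{Suc c..h}. conv_labeling A (take i u) \<noteq> conv_labeling A (take i v)}
      = (\<lambda>k. Suc (c + k)) ` {k\<in>{..<h - c}. xor_conv A ?E k \<noteq> 0}"
  proof (intro set_eqI iffI)
    fix i assume "i \<in> {i\<in>{Suc c..h}. conv_labeling A (take i u) \<noteq> conv_labeling A (take i v)}"
    then show "i \<in> (\<lambda>k. Suc (c + k)) ` {k\<in>{..<h - c}. xor_conv A ?E k \<noteq> 0}"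
      using neq_iff
      by (auto intro!: image_eqI[of _ _ "i - Suc c"])
  next
    fix i assume "i \<in> (\<lambda>k. Suc (c + k)) ` {k\<in>{..<h - c}. xor_conv A ?E k \<noteq> 0}"
    then obtain k where "i = Suc (c + k)" and "k < h - c" and "xor_conv A ?E k \<noteq> 0"
      by blast
    then show "i \<in> {i\<in>{Suc c..h}. conv_labeling A (take i u) \<noteq> conv_labeling A (take i v)}"
      using neq_iff[of "Suc (c + k)"] by auto
  qed
  moreover have "h - (h - c) + 1 = Suc c"
    using assms(3) by simp
  ultimately show ?thesis
    unfolding suffix_hamming_def by (simp add: card_image inj_on_def)
qed

lemma tree_code_bound_le_suffix_hamming:
  assumes "good_generator r n cs" and "length u = h" and "length v = h" and "h \<le> n" and "u \<noteq> v"
  shows "tree_code_bound r (h - lca_depth u v)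
    \<le> suffix_hamming (conv_labeling (generator r cs)) u v h (h - lca_depth u v)"
proof -
  define c where "c = lca_depth u v"
  define E where "E = {t. t < h - c \<and> u ! (c + t) \<noteq> v ! (c + t)}"
  have "c < h" and "u ! c \<noteq> v ! c"
    using lca_depth_less_length[of u v] nth_lca_depth_neq[of u v] assms(2-5) by (auto simp: c_def)
  have agree: "\<And>j. j < c \<Longrightarrow> u ! j = v ! j"
    unfolding c_def by (rule nth_less_lca_depth)
  have "suffix_hamming (conv_labeling (generator r cs)) u v h (h - c)
      = card {k\<in>{..<h - c}. xor_conv (generator r cs) E k \<noteq> 0}"
    unfolding E_def by (rule suffix_hamming_conv_labeling[OF assms(2,3) \<open>c < h\<close> agree])
  moreover have "tree_code_bound r (h - c) \<le> card {k\<in>{..<h - c}. xor_conv (generator r cs) E k \<noteq> 0}"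
    using \<open>c < h\<close> \<open>u ! c \<noteq> v ! c\<close> assms(4)
    by (intro tree_code_bound_le_card_xor_conv_nonzero[OF assms(1)]) (auto simp: E_def)
  ultimately show ?thesis
    by (simp add: c_def)
qed

theorem theorem1:
  fixes n r :: nat
  assumes "n \<ge> 1" and "r \<ge> 4"
  shows "\<exists>lab. valid_labeling r n lab \<and>
    (\<forall>u v h. length u = h \<and> length v = h \<and> h \<le> n \<and> u \<noteq> v \<longrightarrow>
       (let l = h - lca_depth u v in
          real (suffix_hamming lab u v h l) \<ge> tree_code_bound r l))"
proof -
  obtain cs where cs: "cs \<in> words (2 ^ r) n" and good: "good_generator r n cs"
    using exists_good_generator[OF assms(2)] by blast
  have "valid_labeling r n (conv_labeling (generator r cs))"
    using cs by (intro valid_labeling_conv_labeling generator_less) (simp add: words_def)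
  with tree_code_bound_le_suffix_hamming[OF good] show ?thesis
    by (auto simp: Let_def)
qed

end
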